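(* Let $\mathbf{y}\in\mathbb{R}^n$ and $\mathbf{X}=(\mathbf{x}_1,\ldots,\mathbf{x}_p)\in\mathbb{R}^{n\times p}$ satisfy $\sum_{i=1}^n y_i=0$, and for every $j$, $\sum_{i=1}^n x_{ij}=0$ and $\frac1n\sum_{i=1}^n x_{ij}^2=1$. Let $\alpha\in(0,1]$ and for $\lambda>0$ let $$\widehat{\boldsymbol\beta}(\lambda,\alpha)=\operatorname*{argmin}_{\boldsymbol\beta\in\mathbb{R}^p}\ \frac{1}{2n}\|\mathbf{y}-\mathbf{X}\boldsymbol\beta\|^2+\alpha\lambda\|\boldsymbol\beta\|_1+\frac{(1-\alpha)\lambda}{2}\|\boldsymbol\beta\|^2 .$$ Let $\lambda_m=\max_j\left|\frac{\mathbf{x}_j^T\mathbf{y}}{\alpha n}\right|$ and $\mathbf{x}_*=\operatorname*{argmax}_{\mathbf{x}_j}|\mathbf{x}_j^T\mathbf{y}|$. Then for any $\lambda\in(0,\lambda_m]$ and any $\mathbf{x}_j\neq\mathbf{x}_*$, we have $\widehat{\beta}_j(\lambda,\alpha)=0$ if $$\left|(\lambda_m+\lambda)\mathbf{x}_j^T\mathbf{y}-(\lambda_m-\lambda)\frac{\mathrm{sign}(\mathbf{x}_*^T\mathbf{y})\,\alpha\lambda_m}{1+\lambda(1-\alpha)}\mathbf{x}_j^T\mathbf{x}_*\right|<2n\alpha\lambda\lambda_m-(\lambda_m-\lambda)\sqrt{n\|\mathbf{y}\|^2(1+\lambda(1-\alpha))-n^2\alpha^2\lambda_m^2}.$$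
   Context: $\|\cdot\|$ is the Euclidean norm and $\|\cdot\|_1$ the $\ell_1$ norm; $\widehat{\beta}_j(\lambda,\alpha)$ is the $j$th coordinate of the elastic net solution. *)

theory Defs
  imports "HOL-Analysis.Analysis"
begin

text \<open>Data: y in R^n (type real^'n), design matrix X in R^(n x p) (type real^'p^'n,
  rows indexed by 'n, columns by 'p); the j-th column x_j is column j X.\<close>

definition l1norm :: "real^'p \<Rightarrow> real" where
  "l1norm b = (\<Sum>k\<in>UNIV. \<bar>b $ k\<bar>)"

definition enet_obj :: "real^'p^'n \<Rightarrow> real^'n \<Rightarrow> real \<Rightarrow> real \<Rightarrow> real^'p \<Rightarrow> real" where
  "enet_obj X y lam alpha b =
     1 / (2 * real CARD('n)) * (norm (y - X *v b))^2
     + alpha * lam * l1norm b + (1 - alpha) * lam / 2 * (norm b)^2"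

definition enet_solution :: "real^'p^'n \<Rightarrow> real^'n \<Rightarrow> real \<Rightarrow> real \<Rightarrow> real^'p \<Rightarrow> bool" where
  "enet_solution X y lam alpha b \<longleftrightarrow> (\<forall>c. enet_obj X y lam alpha b \<le> enet_obj X y lam alpha c)"

definition lambda_max :: "real^'p^'n \<Rightarrow> real^'n \<Rightarrow> real \<Rightarrow> real" where
  "lambda_max X y alpha = Max (range (\<lambda>j. \<bar>(column j X \<bullet> y) / (alpha * real CARD('n))\<bar>))"

end

theory Submission
  imports Defs
begin

(* The elastic net is a lasso on augmented data: columns (x_k, sigma e_k) with
   sigma^2 = n lambda (1 - alpha), response (y, 0).  For a lasso with penalty mu and
   residual rho the KKT conditions give |a_k . rho| <= mu, with equality whenever b_k is
   nonzero.  Comparing rho with the residual at lambda_m (the response itself), the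
   optimality of b yields an obtuse-angle condition and the maximizing column a half-space;
   together they confine the scaled residual to a ball.  Bounding a_j . rho over that ball
   gives a value below mu under the screening hypothesis, contradicting b_j <> 0. *)

lemma l1norm_add_axis:
  "l1norm (b + t *\<^sub>R axis k 1) = l1norm b + (\<bar>b $ k + t\<bar> - \<bar>b $ k\<bar>)"
proof -
  have "l1norm (b + t *\<^sub>R axis k 1) = \<bar>b $ k + t\<bar> + (\<Sum>i\<in>UNIV-{k}. \<bar>b $ i\<bar>)"
    unfolding l1norm_def by (simp add: sum.remove[of UNIV k] axis_def)
  moreover have "l1norm b = \<bar>b $ k\<bar> + (\<Sum>i\<in>UNIV-{k}. \<bar>b $ i\<bar>)"
    unfolding l1norm_def by (simp add: sum.remove[of UNIV k])
  ultimately show ?thesis by simp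
qed

lemma norm_add_axis_sq:
  "(norm (b + t *\<^sub>R axis k 1))\<^sup>2 = (norm b)\<^sup>2 + 2 * t * b $ k + t\<^sup>2"
  unfolding power2_norm_eq_inner
  by (simp add: inner_add_left inner_add_right inner_axis inner_axis' inner_axis_axis
      inner_commute power2_eq_square algebra_simps)

lemma norm_sub_scaleR_sq:
  fixes r c :: "'a::real_inner"
  shows "(norm (r - t *\<^sub>R c))\<^sup>2 = (norm r)\<^sup>2 - 2 * t * (c \<bullet> r) + t\<^sup>2 * (c \<bullet> c)"
  unfolding power2_norm_eq_inner
  by (simp add: inner_diff_left inner_diff_right inner_commute power2_eq_square algebra_simps)

lemma enet_obj_add_axis:
  fixes X :: "real^'p^'n"
  assumes "column k X \<bullet> column k X = real CARD('n)"
  shows "enet_obj X y lam alpha (b + t *\<^sub>R axis k 1) = enet_obj X y lam alpha b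
     - t * ((column k X \<bullet> (y - X *v b) - real CARD('n) * lam * (1 - alpha) * b $ k) / real CARD('n))
     + (1 + lam * (1 - alpha)) / 2 * t\<^sup>2 + alpha * lam * (\<bar>b $ k + t\<bar> - \<bar>b $ k\<bar>)"
proof -
  have "y - X *v (b + t *\<^sub>R axis k 1) = (y - X *v b) - t *\<^sub>R column k X"
    by (simp add: algebra_simps matrix_vector_mult_basis)
  then have res: "(norm (y - X *v (b + t *\<^sub>R axis k 1)))\<^sup>2
      = (norm (y - X *v b))\<^sup>2 - 2 * t * (column k X \<bullet> (y - X *v b)) + t\<^sup>2 * real CARD('n)"
    by (simp only: norm_sub_scaleR_sq assms)
  then show ?thesis
    unfolding enet_obj_def l1norm_add_axis norm_add_axis_sq by (simp add: res field_simps)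
qed

lemma nonpos_of_quadratic_perturbation_nonneg:
  fixes h C d :: real
  assumes "C > 0" and "d > 0" and perturb: "\<And>t. 0 < t \<Longrightarrow> t < d \<Longrightarrow> 0 \<le> - t * h + C * t\<^sup>2"
  shows "h \<le> 0"
proof (rule ccontr)
  assume "\<not> h \<le> 0"
  define t where "t = min (d / 2) (h / (2 * C))"
  have t: "0 < t" "t < d" "C * t \<le> h / 2"
    using \<open>\<not> h \<le> 0\<close> assms(1,2) by (auto simp: t_def min_def field_simps)
  have "- t * h + C * t\<^sup>2 = t * (C * t - h)" by (simp add: algebra_simps power2_eq_square)
  also have "\<dots> < 0" using t \<open>\<not> h \<le> 0\<close> by (simp add: mult_pos_neg)
  finally show False using perturb[OF t(1,2)] by linarith
qed

lemma enet_solution_kkt: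
  fixes X :: "real^'p^'n"
  assumes sol: "enet_solution X y lam alpha b"
    and col: "column k X \<bullet> column k X = real CARD('n)"
    and "0 < lam" and "0 < alpha" and "alpha \<le> 1"
  defines "G \<equiv> column k X \<bullet> (y - X *v b) - real CARD('n) * lam * (1 - alpha) * b $ k"
  shows "\<bar>G\<bar> \<le> real CARD('n) * alpha * lam"
    and "b $ k * G = real CARD('n) * alpha * lam * \<bar>b $ k\<bar>"
proof -
  define N where "N = real CARD('n)"
  define C where "C = (1 + lam * (1 - alpha)) / 2"
  have "N > 0" "C > 0" using assms(3-5) by (simp_all add: N_def C_def add_pos_nonneg)
  have perturb: "0 \<le> - t * (G / N) + C * t\<^sup>2 + alpha * lam * (\<bar>b $ k + t\<bar> - \<bar>b $ k\<bar>)" for t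
  proof -
    have "enet_obj X y lam alpha b \<le> enet_obj X y lam alpha (b + t *\<^sub>R axis k 1)"
      using sol unfolding enet_solution_def by blast
    then show ?thesis unfolding enet_obj_add_axis[OF col] G_def C_def N_def by linarith
  qed
  have "G / N - alpha * lam \<le> 0"
  proof (rule nonpos_of_quadratic_perturbation_nonneg[OF \<open>C > 0\<close> zero_less_one])
    fix t :: real assume "0 < t"
    then have "alpha * lam * (\<bar>b $ k + t\<bar> - \<bar>b $ k\<bar>) \<le> alpha * lam * t"
      using assms(3,4) by (intro mult_left_mono) auto
    then show "0 \<le> - t * (G / N - alpha * lam) + C * t\<^sup>2"
      using perturb[of t] by (simp add: algebra_simps)
  qed
  moreover have "- G / N - alpha * lam \<le> 0"
  proof (rule nonpos_of_quadratic_perturbation_nonneg[OF \<open>C > 0\<close> zero_less_one])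
    fix t :: real assume "0 < t"
    then have "alpha * lam * (\<bar>b $ k - t\<bar> - \<bar>b $ k\<bar>) \<le> alpha * lam * t"
      using assms(3,4) by (intro mult_left_mono) auto
    then show "0 \<le> - t * (- G / N - alpha * lam) + C * t\<^sup>2"
      using perturb[of "- t"] by (simp add: algebra_simps)
  qed
  ultimately show "\<bar>G\<bar> \<le> N * alpha * lam"
    using \<open>N > 0\<close> by (simp add: field_simps abs_le_iff)
  show "b $ k * G = N * alpha * lam * \<bar>b $ k\<bar>"
  proof (cases "b $ k = 0")
    case False
    define h where "h = G / N - alpha * lam * sgn (b $ k)"
    have small: "\<bar>b $ k + t\<bar> - \<bar>b $ k\<bar> = sgn (b $ k) * t" if "\<bar>t\<bar> < \<bar>b $ k\<bar>" for t
      using that False by (cases "b $ k > 0") (auto simp: abs_if)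
    have "h \<le> 0"
    proof (rule nonpos_of_quadratic_perturbation_nonneg[OF \<open>C > 0\<close>])
      show "0 < \<bar>b $ k\<bar>" using False by simp
      fix t :: real assume "0 < t" "t < \<bar>b $ k\<bar>"
      then have "\<bar>b $ k + t\<bar> - \<bar>b $ k\<bar> = sgn (b $ k) * t" by (intro small) simp
      then show "0 \<le> - t * h + C * t\<^sup>2"
        using perturb[of t] by (simp add: h_def algebra_simps)
    qed
    moreover have "- h \<le> 0"
    proof (rule nonpos_of_quadratic_perturbation_nonneg[OF \<open>C > 0\<close>])
      show "0 < \<bar>b $ k\<bar>" using False by simp
      fix t :: real assume "0 < t" "t < \<bar>b $ k\<bar>"
      then have "\<bar>b $ k + - t\<bar> - \<bar>b $ k\<bar> = sgn (b $ k) * - t" by (intro small) simp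
      then show "0 \<le> - t * - h + C * t\<^sup>2"
        using perturb[of "- t"] by (simp only:) (simp add: h_def algebra_simps)
    qed
    ultimately have "G = N * alpha * lam * sgn (b $ k)"
      using \<open>N > 0\<close> by (simp add: h_def field_simps)
    then show ?thesis by (simp add: abs_sgn algebra_simps)
  qed simp
qed

(* With sigma^2 = n lambda (1 - alpha), the elastic net on (X, y) is the lasso with
   penalty alpha lambda on these columns and response (y, 0). *)
definition enet_aug_col :: "real^'p^'n \<Rightarrow> real \<Rightarrow> 'p \<Rightarrow> (real^'n) \<times> (real^'p)" where
  "enet_aug_col X \<sigma> k = (column k X, \<sigma> *\<^sub>R axis k 1)"

lemma inner_enet_aug_col:
  "enet_aug_col X \<sigma> k \<bullet> enet_aug_col X \<sigma> k' = column k X \<bullet> column k' X + (if k = k' then \<sigma>\<^sup>2 else 0)"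
  by (simp add: enet_aug_col_def inner_axis_axis power2_eq_square)

lemma inner_enet_aug_col_Pair:
  "enet_aug_col X \<sigma> k \<bullet> (r, c) = column k X \<bullet> r + \<sigma> * c $ k"
  by (simp add: enet_aug_col_def inner_axis')

lemma enet_aug_residual:
  fixes X :: "real^'p^'n"
  shows "(y, 0) - (y - X *v b, - \<sigma> *\<^sub>R b) = (\<Sum>k\<in>UNIV. b $ k *\<^sub>R enet_aug_col X \<sigma> k)"
proof -
  have "(\<Sum>k\<in>UNIV. b $ k *\<^sub>R enet_aug_col X \<sigma> k)
      = ((\<Sum>k\<in>UNIV. b $ k *\<^sub>R column k X), \<sigma> *\<^sub>R (\<Sum>k\<in>UNIV. b $ k *\<^sub>R axis k 1))"
    by (simp add: enet_aug_col_def sum_prod scaleR_sum_right mult.commute)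
  also have "\<dots> = (X *v b, \<sigma> *\<^sub>R b)"
    using matrix_mult_sum[of X b] basis_expansion[of b] by (simp add: scalar_mult_eq_scaleR)
  finally show ?thesis by simp
qed

lemma enet_solution_aug_kkt:
  fixes X :: "real^'p^'n"
  assumes "enet_solution X y lam alpha b"
    and "column k X \<bullet> column k X = real CARD('n)"
    and "0 < lam" and "0 < alpha" and "alpha \<le> 1"
    and \<sigma>: "\<sigma>\<^sup>2 = real CARD('n) * lam * (1 - alpha)"
  shows "\<bar>enet_aug_col X \<sigma> k \<bullet> (y - X *v b, - \<sigma> *\<^sub>R b)\<bar> \<le> real CARD('n) * alpha * lam"
    and "b $ k * (enet_aug_col X \<sigma> k \<bullet> (y - X *v b, - \<sigma> *\<^sub>R b)) = real CARD('n) * alpha * lam * \<bar>b $ k\<bar>"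
proof -
  have "enet_aug_col X \<sigma> k \<bullet> (y - X *v b, - \<sigma> *\<^sub>R b)
      = column k X \<bullet> (y - X *v b) - real CARD('n) * lam * (1 - alpha) * b $ k"
    by (simp add: inner_enet_aug_col_Pair \<sigma>[symmetric] power2_eq_square)
  then show "\<bar>enet_aug_col X \<sigma> k \<bullet> (y - X *v b, - \<sigma> *\<^sub>R b)\<bar> \<le> real CARD('n) * alpha * lam"
    and "b $ k * (enet_aug_col X \<sigma> k \<bullet> (y - X *v b, - \<sigma> *\<^sub>R b)) = real CARD('n) * alpha * lam * \<bar>b $ k\<bar>"
    using enet_solution_kkt[OF assms(1-5)] by simp_all
qed

lemma norm_double_sub_le:
  fixes u w e :: "'a::real_inner"
  assumes "u \<bullet> u \<le> (w + e) \<bullet> u" and "w \<bullet> u \<le> 0"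
  shows "norm (2 *\<^sub>R u - e) \<le> norm e"
proof -
  have "(norm (2 *\<^sub>R u - e))\<^sup>2 = 4 * (u \<bullet> u) - 4 * (e \<bullet> u) + (norm e)\<^sup>2"
    unfolding power2_norm_eq_inner by (simp add: inner_diff_left inner_diff_right inner_commute)
  also have "\<dots> \<le> (norm e)\<^sup>2" using assms by (simp add: inner_add_left)
  finally show ?thesis using power2_le_imp_le by force
qed

lemma norm_mult_norm_sub_proj:
  fixes a a' v :: "'a::real_inner"
  assumes "a' \<bullet> a' = a \<bullet> a"
  shows "norm a' * norm (v - ((a \<bullet> v) / (a \<bullet> a)) *\<^sub>R a) = sqrt ((a \<bullet> a) * (v \<bullet> v) - (a \<bullet> v)\<^sup>2)"
proof (cases "a = 0")
  case False
  then have "a \<bullet> a > 0" by simp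
  have "(norm (v - ((a \<bullet> v) / (a \<bullet> a)) *\<^sub>R a))\<^sup>2 = v \<bullet> v - (a \<bullet> v)\<^sup>2 / (a \<bullet> a)"
    using \<open>a \<bullet> a > 0\<close> unfolding norm_sub_scaleR_sq
    by (simp add: dot_square_norm inner_commute power2_eq_square field_simps)
  then have "(norm a' * norm (v - ((a \<bullet> v) / (a \<bullet> a)) *\<^sub>R a))\<^sup>2 = (a \<bullet> a) * (v \<bullet> v) - (a \<bullet> v)\<^sup>2"
    using assms \<open>a \<bullet> a > 0\<close> by (simp add: power_mult_distrib power2_norm_eq_inner field_simps)
  then show ?thesis by (simp add: real_sqrt_unique)
qed (use assms in simp)

lemma lasso_screening_bound:
  fixes a :: "'k::finite \<Rightarrow> 'a::real_inner" and b :: "'k \<Rightarrow> real"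
  assumes resid: "v - \<rho> = (\<Sum>k\<in>UNIV. b k *\<^sub>R a k)"
    and kkt_le: "\<And>k. \<bar>a k \<bullet> \<rho>\<bar> \<le> \<mu>"
    and kkt_eq: "\<And>k. b k * (a k \<bullet> \<rho>) = \<mu> * \<bar>b k\<bar>"
    and max: "\<And>k. \<bar>a k \<bullet> v\<bar> \<le> \<bar>a s \<bullet> v\<bar>"
    and mu_le: "\<mu> \<le> \<bar>a s \<bullet> v\<bar>"
    and "b j \<noteq> 0"
  defines "M \<equiv> \<bar>a s \<bullet> v\<bar>" and "c \<equiv> (a s \<bullet> v) / (a s \<bullet> a s)"
  shows "2 * \<mu> * M \<le> \<bar>(M + \<mu>) * (a j \<bullet> v) - (M - \<mu>) * c * (a j \<bullet> a s)\<bar>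
                      + (M - \<mu>) * (norm (a j) * norm (v - c *\<^sub>R a s))"
proof -
  have "\<mu> \<ge> 0" using kkt_le[of s] by linarith
  define B where "B = (\<Sum>k\<in>UNIV. \<bar>b k\<bar>)"
  have Av: "(v - \<rho>) \<bullet> v \<le> M * B"
  proof -
    have "(v - \<rho>) \<bullet> v = (\<Sum>k\<in>UNIV. b k * (a k \<bullet> v))"
      by (simp add: resid inner_sum_left)
    also have "\<dots> \<le> (\<Sum>k\<in>UNIV. \<bar>b k\<bar> * M)"
    proof (rule sum_mono)
      fix k
      have "b k * (a k \<bullet> v) \<le> \<bar>b k\<bar> * \<bar>a k \<bullet> v\<bar>" by (simp add: abs_mult[symmetric])
      also have "\<dots> \<le> \<bar>b k\<bar> * M" using max[of k] by (simp add: M_def mult_left_mono)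
      finally show "b k * (a k \<bullet> v) \<le> \<bar>b k\<bar> * M" .
    qed
    finally show ?thesis by (simp add: B_def sum_distrib_left mult.commute)
  qed
  moreover have "(v - \<rho>) \<bullet> \<rho> = \<mu> * B"
    by (simp add: resid inner_sum_left kkt_eq B_def sum_distrib_left)
  ultimately have variational: "\<mu> * ((v - \<rho>) \<bullet> v) \<le> M * ((v - \<rho>) \<bullet> \<rho>)"
    using mult_left_mono[OF Av \<open>\<mu> \<ge> 0\<close>] by (simp add: ac_simps)
  \<comment> \<open>Up to the factor \<open>\<mu> * M\<close>, \<open>u\<close> is the difference of the dual points \<open>\<rho> / \<mu>\<close> and
     \<open>v / M\<close> (the latter for the penalty \<open>M\<close>, where all coefficients vanish); the two facts
     below put \<open>u\<close> in the ball with diameter \<open>e\<close>.\<close>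
  define u where "u = M *\<^sub>R \<rho> - \<mu> *\<^sub>R v"
  define e where "e = (M - \<mu>) *\<^sub>R (v - c *\<^sub>R a s)"
  define w where "w = ((M - \<mu>) * c) *\<^sub>R a s"
  have "u \<bullet> u \<le> (w + e) \<bullet> u"
  proof -
    have "w + e - u = M *\<^sub>R (v - \<rho>)"
      by (simp add: u_def w_def e_def algebra_simps)
    then have "(w + e) \<bullet> u - u \<bullet> u = M * (M * ((v - \<rho>) \<bullet> \<rho>) - \<mu> * ((v - \<rho>) \<bullet> v))"
      by (metis inner_diff_left inner_diff_right inner_scaleR_left inner_scaleR_right u_def)
    also have "\<dots> \<ge> 0" using variational M_def by simp
    finally show ?thesis by simp
  qed
  moreover have "w \<bullet> u \<le> 0"
  proof -
    have "(a s \<bullet> v) * (a s \<bullet> \<rho>) \<le> M * \<bar>a s \<bullet> \<rho>\<bar>"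
      by (simp add: M_def abs_mult[symmetric])
    also have "\<dots> \<le> M * \<mu>"
      using kkt_le[of s] by (simp add: M_def mult_left_mono)
    finally have "M * ((a s \<bullet> v) * (a s \<bullet> \<rho>)) \<le> M * (M * \<mu>)"
      by (simp add: M_def mult_left_mono)
    moreover have "(a s \<bullet> v) * (a s \<bullet> v) = M * M"
      by (simp add: M_def abs_mult_self)
    ultimately have "(a s \<bullet> v) * (M * (a s \<bullet> \<rho>) - \<mu> * (a s \<bullet> v)) \<le> 0"
      by (simp add: algebra_simps)
    then have "c * (a s \<bullet> u) \<le> 0"
      by (simp add: c_def u_def inner_diff_right divide_nonpos_nonneg)
    then show ?thesis
      using mu_le by (simp add: w_def M_def mult_nonneg_nonpos mult.assoc)
  qed
  ultimately have ball: "norm (2 *\<^sub>R u - e) \<le> norm e" by (rule norm_double_sub_le)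
  have "2 * \<mu> * M = \<bar>a j \<bullet> (((2 * \<mu>) *\<^sub>R v + e) + (2 *\<^sub>R u - e))\<bar>"
  proof -
    have "\<bar>a j \<bullet> \<rho>\<bar> = \<mu>"
    proof -
      have "\<bar>b j\<bar> * \<bar>a j \<bullet> \<rho>\<bar> = \<bar>b j\<bar> * \<mu>"
        using arg_cong[OF kkt_eq[of j], of abs] \<open>\<mu> \<ge> 0\<close> by (simp add: abs_mult mult.commute)
      then show ?thesis using \<open>b j \<noteq> 0\<close> by simp
    qed
    then show ?thesis by (simp add: u_def abs_mult M_def algebra_simps)
  qed
  also have "\<dots> \<le> \<bar>a j \<bullet> ((2 * \<mu>) *\<^sub>R v + e)\<bar> + \<bar>a j \<bullet> (2 *\<^sub>R u - e)\<bar>"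
    unfolding inner_add_right by (rule abs_triangle_ineq)
  also have "\<dots> \<le> \<bar>a j \<bullet> ((2 * \<mu>) *\<^sub>R v + e)\<bar> + norm (a j) * norm (2 *\<^sub>R u - e)"
    using Cauchy_Schwarz_ineq2 by (rule add_left_mono)
  also have "\<dots> \<le> \<bar>a j \<bullet> ((2 * \<mu>) *\<^sub>R v + e)\<bar> + norm (a j) * norm e"
    using ball by (simp add: mult_left_mono)
  also have "a j \<bullet> ((2 * \<mu>) *\<^sub>R v + e) = (M + \<mu>) * (a j \<bullet> v) - (M - \<mu>) * c * (a j \<bullet> a s)"
    by (simp add: e_def inner_add_right inner_diff_right algebra_simps)
  also have "norm e = (M - \<mu>) * norm (v - c *\<^sub>R a s)"
    using mu_le by (simp add: e_def M_def)
  finally show ?thesis by (simp add: mult.left_commute)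
qed

lemma lambda_max_eq:
  fixes X :: "real^'p^'n"
  assumes "\<And>k. \<bar>column k X \<bullet> y\<bar> \<le> \<bar>column s X \<bullet> y\<bar>" and "0 < alpha"
  shows "lambda_max X y alpha = \<bar>column s X \<bullet> y\<bar> / (alpha * real CARD('n))"
  unfolding lambda_max_def
proof (rule Max_eqI)
  fix z assume "z \<in> range (\<lambda>k. \<bar>column k X \<bullet> y / (alpha * real CARD('n))\<bar>)"
  then show "z \<le> \<bar>column s X \<bullet> y\<bar> / (alpha * real CARD('n))"
    using assms by (auto simp: abs_div divide_right_mono)
qed (use assms(2) in \<open>auto simp: abs_div\<close>)

lemma inner_column_self:
  fixes X :: "real^'p^'n"
  shows "column k X \<bullet> column k X = (\<Sum>i\<in>UNIV. (X $ i $ k)\<^sup>2)"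
  by (simp add: inner_vec_def column_def power2_eq_square)

lemma enet_screening_bound:
  fixes X :: "real^'p^'n"
  assumes sol: "enet_solution X y lam alpha b"
    and col: "\<And>k. column k X \<bullet> column k X = real CARD('n)"
    and "0 < lam" and "0 < alpha" and "alpha \<le> 1"
    and max: "\<And>k. \<bar>column k X \<bullet> y\<bar> \<le> \<bar>column s X \<bullet> y\<bar>"
    and mu_le: "real CARD('n) * alpha * lam \<le> \<bar>column s X \<bullet> y\<bar>"
    and "j \<noteq> s" and "b $ j \<noteq> 0"
  defines "\<mu> \<equiv> real CARD('n) * alpha * lam" and "M \<equiv> \<bar>column s X \<bullet> y\<bar>"
    and "D \<equiv> real CARD('n) * (1 + lam * (1 - alpha))"
  shows "2 * \<mu> * M \<le> \<bar>(M + \<mu>) * (column j X \<bullet> y)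
                          - (M - \<mu>) * ((column s X \<bullet> y) / D) * (column j X \<bullet> column s X)\<bar>
                      + (M - \<mu>) * sqrt (D * (norm y)\<^sup>2 - M\<^sup>2)"
proof -
  define \<sigma> where "\<sigma> = sqrt (real CARD('n) * lam * (1 - alpha))"
  define a where "a = enet_aug_col X \<sigma>"
  define v :: "(real^'n) \<times> (real^'p)" where "v = (y, 0)"
  have \<sigma>2: "\<sigma>\<^sup>2 = real CARD('n) * lam * (1 - alpha)"
    using assms(3-5) by (simp add: \<sigma>_def)
  have resid: "v - (y - X *v b, - \<sigma> *\<^sub>R b) = (\<Sum>k\<in>UNIV. b $ k *\<^sub>R a k)"
    unfolding a_def v_def by (rule enet_aug_residual)
  note kkt = enet_solution_aug_kkt[OF sol col assms(3-5) \<sigma>2, folded a_def]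
  have a_v: "a k \<bullet> v = column k X \<bullet> y" for k
    by (simp add: a_def v_def inner_enet_aug_col_Pair)
  have a_a: "a j \<bullet> a s = column j X \<bullet> column s X" "a k \<bullet> a k = D" for k
    using \<open>j \<noteq> s\<close> \<sigma>2 col[of k] by (auto simp: a_def D_def inner_enet_aug_col algebra_simps)
  have "norm (a j) * norm (v - ((a s \<bullet> v) / (a s \<bullet> a s)) *\<^sub>R a s)
      = sqrt ((a s \<bullet> a s) * (v \<bullet> v) - (a s \<bullet> v)\<^sup>2)"
    by (rule norm_mult_norm_sub_proj) (simp add: a_a(2))
  also have "\<dots> = sqrt (D * (norm y)\<^sup>2 - M\<^sup>2)"
    unfolding a_a(2) a_v M_def by (simp add: v_def power2_norm_eq_inner)
  finally have dist: "norm (a j) * norm (v - ((a s \<bullet> v) / (a s \<bullet> a s)) *\<^sub>R a s)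
      = sqrt (D * (norm y)\<^sup>2 - M\<^sup>2)" .
  show ?thesis
    using lasso_screening_bound[of v "(y - X *v b, - \<sigma> *\<^sub>R b)" "\<lambda>k. b $ k" a \<mu> s j,
        OF resid kkt[folded \<mu>_def] _ _ \<open>b $ j \<noteq> 0\<close>]
      max mu_le
    unfolding dist unfolding a_v a_a M_def \<mu>_def by blast
qed

lemma enet_screening_bound_lambda:
  fixes X :: "real^'p^'n"
  assumes sol: "enet_solution X y lam alpha b"
    and col: "\<And>k. column k X \<bullet> column k X = real CARD('n)"
    and "0 < lam" and "0 < alpha" and "alpha \<le> 1"
    and max: "\<And>k. \<bar>column k X \<bullet> y\<bar> \<le> \<bar>column s X \<bullet> y\<bar>"
    and "lam \<le> \<bar>column s X \<bullet> y\<bar> / (alpha * real CARD('n))"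
    and "j \<noteq> s" and "b $ j \<noteq> 0"
  defines "lm \<equiv> \<bar>column s X \<bullet> y\<bar> / (alpha * real CARD('n))"
  shows "2 * real CARD('n) * alpha * lam * lm
      \<le> \<bar>(lm + lam) * (column j X \<bullet> y)
          - (lm - lam) * (sgn (column s X \<bullet> y) * alpha * lm / (1 + lam * (1 - alpha)))
            * (column j X \<bullet> column s X)\<bar>
        + (lm - lam) * sqrt (real CARD('n) * (norm y)\<^sup>2 * (1 + lam * (1 - alpha))
                              - (real CARD('n))\<^sup>2 * alpha\<^sup>2 * lm\<^sup>2)"
proof -
  define N where "N = real CARD('n)"
  define R where "R = (lm + lam) * (column j X \<bullet> y)
      - (lm - lam) * (sgn (column s X \<bullet> y) * alpha * lm / (1 + lam * (1 - alpha))) * (column j X \<bullet> column s X)"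
  define Q where "Q = sqrt (N * (norm y)\<^sup>2 * (1 + lam * (1 - alpha)) - N\<^sup>2 * alpha\<^sup>2 * lm\<^sup>2)"
  have "N * alpha > 0" using assms(4) by (simp add: N_def)
  have M: "\<bar>column s X \<bullet> y\<bar> = N * alpha * lm"
    using assms(4) by (simp add: lm_def N_def)
  have proj: "(column s X \<bullet> y) / (N * (1 + lam * (1 - alpha)))
      = sgn (column s X \<bullet> y) * alpha * lm / (1 + lam * (1 - alpha))"
  proof -
    define t where "t = sgn (column s X \<bullet> y) * alpha * lm"
    have "column s X \<bullet> y = N * t"
      using sgn_mult_abs[of "column s X \<bullet> y"] M by (simp add: t_def ac_simps)
    moreover have "N > 0" by (simp add: N_def)
    ultimately show ?thesis unfolding t_def[symmetric] by simp
  qed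
  have mu_le: "real CARD('n) * alpha * lam \<le> \<bar>column s X \<bullet> y\<bar>"
    using assms(7) \<open>N * alpha > 0\<close> by (simp add: N_def field_simps)
  have "N * alpha * (2 * N * alpha * lam * lm) = 2 * (N * alpha * lam) * (N * alpha * lm)"
    by (simp add: algebra_simps)
  also have "\<dots> \<le> \<bar>(N * alpha * lm + N * alpha * lam) * (column j X \<bullet> y)
          - (N * alpha * lm - N * alpha * lam)
            * (sgn (column s X \<bullet> y) * alpha * lm / (1 + lam * (1 - alpha))) * (column j X \<bullet> column s X)\<bar>
        + (N * alpha * lm - N * alpha * lam)
          * sqrt (N * (1 + lam * (1 - alpha)) * (norm y)\<^sup>2 - (N * alpha * lm)\<^sup>2)"
    using enet_screening_bound[OF sol col assms(3-6) mu_le assms(8,9)]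
    unfolding N_def[symmetric] M proj .
  also have "\<dots> = \<bar>N * alpha * R\<bar> + N * alpha * ((lm - lam) * Q)"
    by (simp add: R_def Q_def power_mult_distrib algebra_simps)
  also have "\<dots> = N * alpha * (\<bar>R\<bar> + (lm - lam) * Q)"
    using \<open>N * alpha > 0\<close> by (simp add: abs_mult[of "N * alpha"] distrib_left)
  finally have "2 * N * alpha * lam * lm \<le> \<bar>R\<bar> + (lm - lam) * Q"
    using \<open>N * alpha > 0\<close> by (rule mult_left_le_imp_le)
  then show ?thesis unfolding R_def Q_def N_def .
qed

theorem theorem4p1:
  fixes y :: "real^'n" and X :: "real^'p^'n"
    and alpha lam :: real and jstar j :: 'p and b :: "real^'p"
  assumes y_centered: "(\<Sum>i\<in>UNIV. y $ i) = 0"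
    and X_centered: "\<And>k. (\<Sum>i\<in>UNIV. X $ i $ k) = 0"
    and X_scaled: "\<And>k. (1 / real CARD('n)) * (\<Sum>i\<in>UNIV. (X $ i $ k)^2) = 1"
    and alpha: "0 < alpha" "alpha \<le> 1"
    and jstar: "\<And>k. \<bar>column k X \<bullet> y\<bar> \<le> \<bar>column jstar X \<bullet> y\<bar>"
    and lam: "0 < lam" "lam \<le> lambda_max X y alpha"
    and j_ne: "column j X \<noteq> column jstar X"
    and sol: "enet_solution X y lam alpha b"
    and rule: "\<bar>(lambda_max X y alpha + lam) * (column j X \<bullet> y)
               - (lambda_max X y alpha - lam)
                 * (sgn (column jstar X \<bullet> y) * alpha * lambda_max X y alpha / (1 + lam * (1 - alpha)))
                 * (column j X \<bullet> column jstar X)\<bar>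
             < 2 * real CARD('n) * alpha * lam * lambda_max X y alpha
               - (lambda_max X y alpha - lam)
                 * sqrt (real CARD('n) * (norm y)^2 * (1 + lam * (1 - alpha))
                         - (real CARD('n))^2 * alpha^2 * (lambda_max X y alpha)^2)"
  shows "b $ j = 0"
proof (rule ccontr)
  assume "b $ j \<noteq> 0"
  have col: "column k X \<bullet> column k X = real CARD('n)" for k
    using X_scaled[of k] by (simp add: inner_column_self field_simps)
  have lm: "lambda_max X y alpha = \<bar>column jstar X \<bullet> y\<bar> / (alpha * real CARD('n))"
    using jstar alpha(1) by (rule lambda_max_eq)
  have "j \<noteq> jstar" using j_ne by blast
  from enet_screening_bound_lambda[OF sol col lam(1) alpha jstar _ this \<open>b $ j \<noteq> 0\<close>] lam rule
  show False unfolding lm by linarith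
qed

end
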